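(* Let $\mu$ be the Cauchy distribution $d\mu(x)=\frac1\pi\frac{dx}{1+x^2}$ and $t>0$. For each $u\in\mathbb R$, $v_{t}(u)$ is the unique positive number $v$ satisfying \[u^2=\frac1v(1+v)(t-v-v^2).\] Consequently $u$ and $\frac{dv_t}{du}(u)$ have opposite sign; in particular $v_t$ is unimodal with peak at $0$, and $v_t(0)=\frac{-1+\sqrt{1+4t}}{2}$.
   Context: $v_t(u)=\inf\{v>0:\int\frac{d\mu(x)}{(u-x)^2+v^2}\le\frac1t\}$ for $u\in\mathbb R$. *)

theory Defs
  imports "HOL-Analysis.Analysis"
begin

definition cauchy_measure :: "real measure" where
  "cauchy_measure = density lborel (\<lambda>x. ennreal (1 / (pi * (1 + x\<^sup>2))))"

definition v_t :: "real \<Rightarrow> real \<Rightarrow> real" where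
  "v_t t u = Inf {v. v > 0 \<and>
      (\<integral>x. 1 / ((u - x)\<^sup>2 + v\<^sup>2) \<partial>cauchy_measure) \<le> 1 / t}"

end

(*
  By partial fractions, the Poisson integral of the Cauchy density is again a Cauchy density:
  int dmu(x) / ((u - x)^2 + v^2) = (1 + v) / (v (u^2 + (1 + v)^2)).  So the condition
  defining v_t(u) reads phi(v) <= u^2 with phi(v) = (1 + v)(t - v - v^2) / v, and phi decreases
  strictly from +infinity to -infinity on (0, infinity).  Hence v_t(u) = phi^-1(u^2); the inverse
  function theorem gives v_t'(u) = 2u / phi'(v_t(u)) with phi' < 0, and v_t(0) is the positive
  root of v + v^2 = t.
*)
theory Submission
  imports Defs "HOL-Real_Asymp.Real_Asymp" "HOL-Complex_Analysis.Conformal_Mappings"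
begin

lemma integral_cauchy_measure:
  fixes f :: "real \<Rightarrow> real"
  assumes [measurable]: "f \<in> borel_measurable borel"
  shows "(\<integral>x. f x \<partial>cauchy_measure) = (\<integral>x. f x / (pi * (1 + x\<^sup>2)) \<partial>lborel)"
  unfolding cauchy_measure_def by (subst integral_density) auto

lemma integral_lborel_eq_limits:
  fixes f F :: "real \<Rightarrow> real"
  assumes "\<And>x. (F has_real_derivative f x) (at x)" and "\<And>x. isCont f x" and "\<And>x. 0 \<le> f x"
    and "(F \<longlongrightarrow> a) at_bot" and "(F \<longlongrightarrow> b) at_top"
  shows "(\<integral>x. f x \<partial>lborel) = b - a"
proof -
  have "(\<integral>x. f x \<partial>lborel) = (LBINT x=-\<infinity>..\<infinity>. f x)"
    by (simp add: interval_lebesgue_integral_def set_lebesgue_integral_def)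
  also have "\<dots> = b - a"
    by (rule interval_integral_FTC_nonneg) (use assms in \<open>auto simp: ereal_tendsto_simps\<close>)
  finally show ?thesis .
qed

text \<open>Partial fractions: with \<open>D = s\<^sup>2 + 4 u\<^sup>2\<close>,
  \<open>D / ((1 + x\<^sup>2) ((x - u)\<^sup>2 + v\<^sup>2)) = (2 u x + s) / (1 + x\<^sup>2) + (4 u\<^sup>2 - 2 u x - s) / ((x - u)\<^sup>2 + v\<^sup>2)\<close>.\<close>

lemma cauchy_poisson_antiderivative:
  fixes u v x :: real
  assumes "v > 0"
  defines "s \<equiv> u\<^sup>2 + v\<^sup>2 - 1"
  shows "((\<lambda>x. u * (ln (1 + x\<^sup>2) - ln ((x - u)\<^sup>2 + v\<^sup>2)) + s * arctan x
              + (2 * u\<^sup>2 - s) / v * arctan ((x - u) / v))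
          has_real_derivative (s\<^sup>2 + 4 * u\<^sup>2) / ((1 + x\<^sup>2) * ((u - x)\<^sup>2 + v\<^sup>2))) (at x)"
    (is "(?G has_real_derivative _) _")
proof -
  define P Q where "P = 1 + x\<^sup>2" and "Q = (x - u)\<^sup>2 + v\<^sup>2"
  have "P > 0" "Q > 0"
    using \<open>v > 0\<close> unfolding P_def Q_def by (simp_all add: add_pos_nonneg add_nonneg_pos)
  have "((\<lambda>x. ln (1 + x\<^sup>2) - ln ((x - u)\<^sup>2 + v\<^sup>2)) has_real_derivative 2 * x / P - 2 * (x - u) / Q) (at x)"
    using \<open>P > 0\<close> \<open>Q > 0\<close> unfolding P_def Q_def by (auto intro!: derivative_eq_intros)
  moreover have "(arctan has_real_derivative 1 / P) (at x)"
    unfolding P_def using DERIV_arctan by (simp add: divide_inverse)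
  moreover have "((\<lambda>x. arctan ((x - u) / v)) has_real_derivative v / Q) (at x)"
    using \<open>v > 0\<close> \<open>Q > 0\<close> unfolding Q_def
    by (auto intro!: derivative_eq_intros simp: field_simps power2_eq_square)
  ultimately have "(?G has_real_derivative
      u * (2 * x / P - 2 * (x - u) / Q) + s * (1 / P) + (2 * u\<^sup>2 - s) / v * (v / Q)) (at x)"
    by (intro DERIV_add DERIV_cmult)
  moreover have "u * (2 * x / P - 2 * (x - u) / Q) + s * (1 / P) + (2 * u\<^sup>2 - s) / v * (v / Q)
      = ((2 * u * x + s) * Q + (4 * u\<^sup>2 - 2 * u * x - s) * P) / (P * Q)"
    using \<open>P > 0\<close> \<open>Q > 0\<close> \<open>v > 0\<close> by (simp add: field_simps power2_eq_square)
  moreover have "(2 * u * x + s) * Q + (4 * u\<^sup>2 - 2 * u * x - s) * P = s\<^sup>2 + 4 * u\<^sup>2"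
    unfolding P_def Q_def s_def by (simp add: algebra_simps power2_eq_square)
  moreover have "P * Q = (1 + x\<^sup>2) * ((u - x)\<^sup>2 + v\<^sup>2)"
    unfolding P_def Q_def by (simp add: power2_commute)
  ultimately show ?thesis by simp
qed

lemma arctan_square_antiderivative:
  fixes x :: real
  shows "((\<lambda>x. (x / (1 + x\<^sup>2) + arctan x) / 2) has_real_derivative 1 / (1 + x\<^sup>2)\<^sup>2) (at x)"
proof -
  define P where "P = 1 + x\<^sup>2"
  have "P > 0" unfolding P_def by (simp add: add_pos_nonneg)
  have "((\<lambda>x. x / (1 + x\<^sup>2)) has_real_derivative (1 * P - x * (2 * x)) / (P * P)) (at x)"
    using \<open>P > 0\<close> unfolding P_def
    by (intro DERIV_divide) (auto intro!: derivative_eq_intros)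
  then have "((\<lambda>x. (x / (1 + x\<^sup>2) + arctan x) / 2) has_real_derivative
      ((1 * P - x * (2 * x)) / (P * P) + inverse P) / 2) (at x)"
    unfolding P_def by (intro DERIV_cdivide DERIV_add DERIV_arctan)
  moreover have "((1 * P - x * (2 * x)) / (P * P) + inverse P) / 2 = 1 / P\<^sup>2"
  proof -
    have eq: "1 * P - x * (2 * x) = 2 - P" unfolding P_def by (simp add: power2_eq_square)
    show ?thesis unfolding eq using \<open>P > 0\<close> by (simp add: field_simps power2_eq_square)
  qed
  ultimately show ?thesis unfolding P_def by simp
qed

lemma lborel_integral_inverse_one_plus_square_squared:
  "(\<integral>x. 1 / (1 + x\<^sup>2)\<^sup>2 \<partial>lborel) = pi / 2"
proof -
  have [simp]: "1 + x\<^sup>2 \<noteq> 0" for x :: real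
    using add_pos_nonneg[of 1 "x\<^sup>2"] by simp
  have lim: "((\<lambda>x::real. x / (1 + x\<^sup>2)) \<longlongrightarrow> 0) at_bot" "((\<lambda>x::real. x / (1 + x\<^sup>2)) \<longlongrightarrow> 0) at_top"
    by real_asymp+
  have "((\<lambda>x. (x / (1 + x\<^sup>2) + arctan x) / 2) \<longlongrightarrow> (0 + - (pi / 2)) / 2) at_bot"
    "((\<lambda>x. (x / (1 + x\<^sup>2) + arctan x) / 2) \<longlongrightarrow> (0 + pi / 2) / 2) at_top"
    by (intro tendsto_divide tendsto_const tendsto_add lim tendsto_arctan_at_bot tendsto_arctan_at_top; simp)+
  then have "(\<integral>x. 1 / (1 + x\<^sup>2)\<^sup>2 \<partial>lborel) = (0 + pi / 2) / 2 - (0 + - (pi / 2)) / 2"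
    using arctan_square_antiderivative by (intro integral_lborel_eq_limits) (auto intro!: continuous_intros)
  then show ?thesis by simp
qed

text \<open>At \<open>(u, v) = (0, 1)\<close> the two quadratic factors coincide and the partial fraction
  decomposition degenerates (\<open>D = 0\<close>).\<close>

lemma lborel_integral_cauchy_poisson_nondegenerate:
  fixes u v :: real
  assumes "v > 0" and "u \<noteq> 0 \<or> v \<noteq> 1"
  shows "(\<integral>x. 1 / ((1 + x\<^sup>2) * ((u - x)\<^sup>2 + v\<^sup>2)) \<partial>lborel)
           = pi * (1 + v) / (v * (u\<^sup>2 + (1 + v)\<^sup>2))"
proof -
  define s where "s = u\<^sup>2 + v\<^sup>2 - 1"
  define D where "D = s\<^sup>2 + 4 * u\<^sup>2"
  define G where "G x = u * (ln (1 + x\<^sup>2) - ln ((x - u)\<^sup>2 + v\<^sup>2)) + s * arctan x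
      + (2 * u\<^sup>2 - s) / v * arctan ((x - u) / v)" for x
  have D_factor: "D = (u\<^sup>2 + (1 + v)\<^sup>2) * (u\<^sup>2 + (v - 1)\<^sup>2)"
    unfolding D_def s_def by (simp add: algebra_simps power2_eq_square)
  have "u\<^sup>2 + (v - 1)\<^sup>2 > 0" "u\<^sup>2 + (1 + v)\<^sup>2 > 0"
    using assms by (auto simp: add_nonneg_pos add_pos_nonneg)
  then have "D > 0" unfolding D_factor by simp
  have [simp]: "1 + x\<^sup>2 \<noteq> 0" "(u - x)\<^sup>2 + v\<^sup>2 \<noteq> 0" for x
    using \<open>v > 0\<close> add_pos_nonneg[of 1 "x\<^sup>2"] add_nonneg_pos[of "(u - x)\<^sup>2" "v\<^sup>2"] by auto
  have deriv: "((\<lambda>x. G x / D) has_real_derivative 1 / ((1 + x\<^sup>2) * ((u - x)\<^sup>2 + v\<^sup>2))) (at x)"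
    for x
  proof -
    have "((\<lambda>x. G x / D) has_real_derivative D / ((1 + x\<^sup>2) * ((u - x)\<^sup>2 + v\<^sup>2)) / D) (at x)"
      unfolding G_def D_def s_def by (intro DERIV_cdivide cauchy_poisson_antiderivative \<open>v > 0\<close>)
    then show ?thesis using \<open>D > 0\<close> by simp
  qed
  have "((\<lambda>x::real. ln (1 + x\<^sup>2) - ln ((x - u)\<^sup>2 + v\<^sup>2)) \<longlongrightarrow> 0) at_bot"
    "((\<lambda>x::real. ln (1 + x\<^sup>2) - ln ((x - u)\<^sup>2 + v\<^sup>2)) \<longlongrightarrow> 0) at_top"
    "((\<lambda>x::real. arctan ((x - u) / v)) \<longlongrightarrow> - (pi / 2)) at_bot"
    "((\<lambda>x::real. arctan ((x - u) / v)) \<longlongrightarrow> pi / 2) at_top"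
    using \<open>v > 0\<close> by real_asymp+
  then have "((\<lambda>x. G x / D) \<longlongrightarrow> (u * 0 + s * - (pi / 2) + (2 * u\<^sup>2 - s) / v * - (pi / 2)) / D) at_bot"
    "((\<lambda>x. G x / D) \<longlongrightarrow> (u * 0 + s * (pi / 2) + (2 * u\<^sup>2 - s) / v * (pi / 2)) / D) at_top"
    unfolding G_def using \<open>D > 0\<close>
    by (intro tendsto_divide tendsto_const tendsto_add tendsto_mult_left tendsto_arctan_at_bot
        tendsto_arctan_at_top; simp)+
  then have "(\<integral>x. 1 / ((1 + x\<^sup>2) * ((u - x)\<^sup>2 + v\<^sup>2)) \<partial>lborel)
      = (u * 0 + s * (pi / 2) + (2 * u\<^sup>2 - s) / v * (pi / 2)) / D
        - (u * 0 + s * - (pi / 2) + (2 * u\<^sup>2 - s) / v * - (pi / 2)) / D"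
    using deriv \<open>v > 0\<close> by (intro integral_lborel_eq_limits) (auto intro!: continuous_intros)
  also have "\<dots> = pi * (s * v + 2 * u\<^sup>2 - s) / (v * D)"
    using \<open>v > 0\<close> \<open>D > 0\<close> by (simp add: field_simps)
  also have "s * v + 2 * u\<^sup>2 - s = (1 + v) * (u\<^sup>2 + (v - 1)\<^sup>2)"
    unfolding s_def by (simp add: algebra_simps power2_eq_square)
  finally show ?thesis
    unfolding D_factor using assms(2) \<open>u\<^sup>2 + (v - 1)\<^sup>2 > 0\<close> by simp
qed

lemma lborel_integral_cauchy_poisson:
  fixes u v :: real
  assumes "v > 0"
  shows "(\<integral>x. 1 / ((1 + x\<^sup>2) * ((u - x)\<^sup>2 + v\<^sup>2)) \<partial>lborel)
           = pi * (1 + v) / (v * (u\<^sup>2 + (1 + v)\<^sup>2))"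
proof (cases "u = 0 \<and> v = 1")
  case True
  then show ?thesis
    using lborel_integral_inverse_one_plus_square_squared by (simp add: power2_eq_square ac_simps)
qed (use assms lborel_integral_cauchy_poisson_nondegenerate in auto)

lemma cauchy_poisson_integral:
  fixes u v :: real
  assumes "v > 0"
  shows "(\<integral>x. 1 / ((u - x)\<^sup>2 + v\<^sup>2) \<partial>cauchy_measure) = (1 + v) / (v * (u\<^sup>2 + (1 + v)\<^sup>2))"
proof -
  have "(\<integral>x. 1 / ((u - x)\<^sup>2 + v\<^sup>2) \<partial>cauchy_measure)
      = (\<integral>x. 1 / ((1 + x\<^sup>2) * ((u - x)\<^sup>2 + v\<^sup>2)) / pi \<partial>lborel)"
    by (subst integral_cauchy_measure) (simp_all add: ac_simps)
  also have "\<dots> = (1 + v) / (v * (u\<^sup>2 + (1 + v)\<^sup>2))"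
    unfolding integral_divide_zero lborel_integral_cauchy_poisson[OF assms]
    by simp
  finally show ?thesis .
qed

lemma image_Ioi_eq_UNIV:
  fixes f :: "real \<Rightarrow> real"
  assumes cont: "continuous_on {a<..} f"
    and lim_right: "filterlim f at_top (at_right a)" and lim_top: "filterlim f at_bot at_top"
  shows "f ` {a<..} = UNIV"
proof (intro set_eqI iffI)
  fix y :: real
  have "\<forall>\<^sub>F x in at_right a. a < x \<and> y \<le> f x"
    using eventually_at_right_less lim_right unfolding filterlim_at_top by (intro eventually_conj) auto
  then obtain x0 where x0: "a < x0" "y \<le> f x0"
    using eventually_happens[of _ "at_right a"] by auto
  have "\<forall>\<^sub>F x in at_top. x0 < x \<and> f x \<le> y"
    using eventually_gt_at_top lim_top unfolding filterlim_at_bot by (intro eventually_conj) auto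
  then obtain x1 where x1: "x0 < x1" "f x1 \<le> y"
    by (auto simp: eventually_at_top_linorder)
  have "continuous_on {x0..x1} f"
    using x0(1) by (intro continuous_on_subset[OF cont]) auto
  then obtain x where "x0 \<le> x" "x \<le> x1" "f x = y"
    using IVT2'[of f x1 y x0] x0(2) x1 by auto
  then show "y \<in> f ` {a<..}"
    using x0(1) by force
qed simp

definition u2_of_v :: "real \<Rightarrow> real \<Rightarrow> real" where
  "u2_of_v t v = (1 / v) * (1 + v) * (t - v - v\<^sup>2)"

lemma u2_of_v_expand: "v \<noteq> 0 \<Longrightarrow> u2_of_v t v = t / v + (t - 1) - 2 * v - v\<^sup>2"
  unfolding u2_of_v_def by (simp add: field_simps power2_eq_square)

lemma u2_of_v_strict_antimono:
  assumes "t > 0" "0 < v" "v < w"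
  shows "u2_of_v t w < u2_of_v t v"
proof -
  have "t / w < t / v" using assms by (simp add: divide_strict_left_mono)
  moreover have "v\<^sup>2 < w\<^sup>2" using assms by (simp add: power_strict_mono)
  ultimately show ?thesis using assms by (simp add: u2_of_v_expand)
qed

lemma u2_of_v_le_iff:
  assumes "t > 0" "v > 0" "w > 0"
  shows "u2_of_v t v \<le> u2_of_v t w \<longleftrightarrow> w \<le> v"
  using u2_of_v_strict_antimono[of t v w] u2_of_v_strict_antimono[of t w v] assms
  by (cases v w rule: linorder_cases) auto

lemma inj_on_u2_of_v: "t > 0 \<Longrightarrow> inj_on (u2_of_v t) {0<..}"
  by (rule inj_onI) (metis greaterThan_iff order_antisym order_refl u2_of_v_le_iff)

lemma continuous_on_u2_of_v: "continuous_on {0<..} (u2_of_v t)"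
  unfolding u2_of_v_def by (intro continuous_intros) auto

lemma u2_of_v_has_real_derivative:
  "v > 0 \<Longrightarrow> (u2_of_v t has_real_derivative - t / v\<^sup>2 - 2 - 2 * v) (at v)"
  unfolding u2_of_v_def by (auto intro!: derivative_eq_intros simp: field_simps power2_eq_square)

lemma image_u2_of_v: "t > 0 \<Longrightarrow> u2_of_v t ` {0<..} = UNIV"
proof (rule image_Ioi_eq_UNIV)
  show "continuous_on {0<..} (u2_of_v t)" by (rule continuous_on_u2_of_v)
  assume "t > 0"
  then show "filterlim (u2_of_v t) at_top (at_right 0)" "filterlim (u2_of_v t) at_bot at_top"
    unfolding u2_of_v_def by real_asymp+
qed

definition v_of_u2 :: "real \<Rightarrow> real \<Rightarrow> real" where
  "v_of_u2 t = the_inv_into {0<..} (u2_of_v t)"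

lemma v_of_u2_pos: "t > 0 \<Longrightarrow> v_of_u2 t y > 0"
  unfolding v_of_u2_def using the_inv_into_into[OF inj_on_u2_of_v] image_u2_of_v by auto

lemma u2_of_v_v_of_u2: "t > 0 \<Longrightarrow> u2_of_v t (v_of_u2 t y) = y"
  unfolding v_of_u2_def using f_the_inv_into_f[OF inj_on_u2_of_v] image_u2_of_v by auto

lemma v_of_u2_u2_of_v: "t > 0 \<Longrightarrow> w > 0 \<Longrightarrow> v_of_u2 t (u2_of_v t w) = w"
  unfolding v_of_u2_def using the_inv_into_f_f[OF inj_on_u2_of_v] by auto

lemma v_of_u2_strict_antimono:
  assumes "t > 0" "y < z"
  shows "v_of_u2 t z < v_of_u2 t y"
proof -
  have "\<not> u2_of_v t (v_of_u2 t z) \<le> u2_of_v t (v_of_u2 t y)"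
    using assms by (simp add: u2_of_v_v_of_u2)
  then show ?thesis
    using u2_of_v_le_iff[OF \<open>t > 0\<close> v_of_u2_pos v_of_u2_pos] \<open>t > 0\<close> by (simp add: not_le)
qed

lemma v_of_u2_has_real_derivative:
  assumes "t > 0"
  shows "(v_of_u2 t has_real_derivative inverse (- t / (v_of_u2 t y)\<^sup>2 - 2 - 2 * v_of_u2 t y)) (at y)"
proof (rule has_field_derivative_inverse_strong_x[where S = "{0<..}"])
  show "(u2_of_v t has_real_derivative - t / (v_of_u2 t y)\<^sup>2 - 2 - 2 * v_of_u2 t y) (at (v_of_u2 t y))"
    using assms by (intro u2_of_v_has_real_derivative v_of_u2_pos)
  have "t / (v_of_u2 t y)\<^sup>2 > 0"
    using assms v_of_u2_pos[OF assms, of y] by simp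
  then show "- t / (v_of_u2 t y)\<^sup>2 - 2 - 2 * v_of_u2 t y \<noteq> 0"
    using v_of_u2_pos[OF assms, of y] by simp
qed (use assms in \<open>auto simp: continuous_on_u2_of_v v_of_u2_pos u2_of_v_v_of_u2 v_of_u2_u2_of_v\<close>)

lemma cauchy_poisson_integral_le_inverse_iff:
  fixes t u v :: real
  assumes "t > 0" "v > 0"
  shows "(\<integral>x. 1 / ((u - x)\<^sup>2 + v\<^sup>2) \<partial>cauchy_measure) \<le> 1 / t \<longleftrightarrow> u2_of_v t v \<le> u\<^sup>2"
proof -
  have "v * (u\<^sup>2 + (1 + v)\<^sup>2) > 0" using assms by (simp add: add_nonneg_pos)
  then have "(1 + v) / (v * (u\<^sup>2 + (1 + v)\<^sup>2)) \<le> 1 / t \<longleftrightarrow> t * (1 + v) \<le> v * (u\<^sup>2 + (1 + v)\<^sup>2)"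
    using assms by (simp add: field_simps)
  also have "\<dots> \<longleftrightarrow> u2_of_v t v * v \<le> u\<^sup>2 * v"
  proof -
    have "u2_of_v t v * v = t * (1 + v) - v * (1 + v)\<^sup>2"
      using assms by (simp add: u2_of_v_def field_simps power2_eq_square)
    moreover have "v * (u\<^sup>2 + (1 + v)\<^sup>2) = u\<^sup>2 * v + v * (1 + v)\<^sup>2"
      by (simp add: algebra_simps)
    ultimately show ?thesis by linarith
  qed
  also have "\<dots> \<longleftrightarrow> u2_of_v t v \<le> u\<^sup>2" using assms by simp
  finally show ?thesis using assms by (simp add: cauchy_poisson_integral)
qed

lemma v_t_eq_v_of_u2:
  assumes "t > 0"
  shows "v_t t = (\<lambda>u. v_of_u2 t (u\<^sup>2))"
proof
  fix u
  have "v > 0 \<and> (\<integral>x. 1 / ((u - x)\<^sup>2 + v\<^sup>2) \<partial>cauchy_measure) \<le> 1 / t \<longleftrightarrow> v_of_u2 t (u\<^sup>2) \<le> v"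
    for v
  proof -
    have "v > 0 \<and> (\<integral>x. 1 / ((u - x)\<^sup>2 + v\<^sup>2) \<partial>cauchy_measure) \<le> 1 / t
        \<longleftrightarrow> v > 0 \<and> u2_of_v t v \<le> u2_of_v t (v_of_u2 t (u\<^sup>2))"
      using assms by (simp add: cauchy_poisson_integral_le_inverse_iff u2_of_v_v_of_u2 cong: conj_cong)
    also have "\<dots> \<longleftrightarrow> v_of_u2 t (u\<^sup>2) \<le> v"
      using u2_of_v_le_iff[OF assms _ v_of_u2_pos[OF assms]] v_of_u2_pos[OF assms, of "u\<^sup>2"] by auto
    finally show ?thesis .
  qed
  then show "v_t t u = v_of_u2 t (u\<^sup>2)"
    unfolding v_t_def by (simp add: atLeast_def[symmetric])
qed

lemma v_t_pos: "t > 0 \<Longrightarrow> v_t t u > 0"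
  by (simp add: v_t_eq_v_of_u2 v_of_u2_pos)

lemma v_t_has_real_derivative:
  assumes "t > 0"
  shows "(v_t t has_real_derivative 2 * u / (- t / (v_t t u)\<^sup>2 - 2 - 2 * v_t t u)) (at u)"
proof -
  have "(v_t t has_real_derivative
      inverse (- t / (v_of_u2 t (u\<^sup>2))\<^sup>2 - 2 - 2 * v_of_u2 t (u\<^sup>2)) * (2 * u)) (at u)"
    unfolding v_t_eq_v_of_u2[OF assms]
    by (rule DERIV_chain2[OF v_of_u2_has_real_derivative[OF assms]]) (auto intro!: derivative_eq_intros)
  then show ?thesis
    by (simp add: v_t_eq_v_of_u2[OF assms] divide_inverse mult.commute)
qed

lemma sgn_deriv_v_t:
  assumes "t > 0"
  shows "sgn (deriv (v_t t) u) = - sgn u"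
proof -
  have "t / (v_t t u)\<^sup>2 > 0"
    using assms v_t_pos[OF assms, of u] by simp
  then have "- t / (v_t t u)\<^sup>2 - 2 - 2 * v_t t u < 0"
    using v_t_pos[OF assms, of u] by simp
  then show ?thesis
    using DERIV_imp_deriv[OF v_t_has_real_derivative[OF assms]] by (simp add: sgn_mult)
qed

lemma v_t_zero:
  assumes "t > 0"
  shows "v_t t 0 = (-1 + sqrt (1 + 4 * t)) / 2"
proof -
  define w where "w = (-1 + sqrt (1 + 4 * t)) / 2"
  have "sqrt (1 + 4 * t) > 1"
    using assms by (simp add: real_less_rsqrt)
  then have "w > 0"
    unfolding w_def by simp
  have "w + w\<^sup>2 = t"
    unfolding w_def using assms by (simp add: field_simps power2_eq_square)
  then have "u2_of_v t w = 0"
    by (simp add: u2_of_v_def)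
  then show ?thesis
    using v_of_u2_u2_of_v[OF assms \<open>w > 0\<close>] by (simp add: v_t_eq_v_of_u2 assms w_def)
qed

theorem lemma6p3:
  fixes t :: real
  assumes "t > 0"
  shows "(\<forall>u::real. v_t t u > 0
            \<and> u\<^sup>2 = (1 / v_t t u) * (1 + v_t t u) * (t - v_t t u - (v_t t u)\<^sup>2)
            \<and> (\<forall>w>0. u\<^sup>2 = (1 / w) * (1 + w) * (t - w - w\<^sup>2) \<longrightarrow> w = v_t t u))
       \<and> (\<forall>u::real. v_t t differentiable (at u)
            \<and> sgn (deriv (v_t t) u) = - sgn u)
       \<and> (\<forall>a b::real. a < b \<and> b \<le> 0 \<longrightarrow> v_t t a < v_t t b)
       \<and> (\<forall>a b::real. 0 \<le> a \<and> a < b \<longrightarrow> v_t t b < v_t t a)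
       \<and> v_t t 0 = (-1 + sqrt (1 + 4 * t)) / 2"
proof (intro conjI allI impI)
  fix u :: real
  show "v_t t u > 0"
    using assms by (rule v_t_pos)
  show "u\<^sup>2 = (1 / v_t t u) * (1 + v_t t u) * (t - v_t t u - (v_t t u)\<^sup>2)"
    unfolding v_t_eq_v_of_u2[OF assms] using u2_of_v_v_of_u2[OF assms] by (simp add: u2_of_v_def)
  fix w :: real
  assume "w > 0" "u\<^sup>2 = (1 / w) * (1 + w) * (t - w - w\<^sup>2)"
  then show "w = v_t t u"
    unfolding v_t_eq_v_of_u2[OF assms] using v_of_u2_u2_of_v[OF assms] by (simp add: u2_of_v_def)
next
  fix u :: real
  show "v_t t differentiable (at u)"
    using v_t_has_real_derivative[OF assms] by (auto simp: real_differentiable_def)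
  show "sgn (deriv (v_t t) u) = - sgn u"
    using assms by (rule sgn_deriv_v_t)
next
  fix a b :: real
  assume "a < b \<and> b \<le> 0"
  then have "(- b)\<^sup>2 < (- a)\<^sup>2" by (intro power_strict_mono) auto
  then show "v_t t a < v_t t b"
    using assms by (simp add: v_t_eq_v_of_u2 v_of_u2_strict_antimono)
next
  fix a b :: real
  assume "0 \<le> a \<and> a < b"
  then have "a\<^sup>2 < b\<^sup>2" by (simp add: power_strict_mono)
  then show "v_t t b < v_t t a"
    using assms by (simp add: v_t_eq_v_of_u2 v_of_u2_strict_antimono)
next
  show "v_t t 0 = (-1 + sqrt (1 + 4 * t)) / 2"
    using assms by (rule v_t_zero)
qed

end
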